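(* For every max game $\mathcal R$, every sequence of greedy moves starting from an arbitrary routing is finite and terminates at a Nash-routing (so Nash-routings exist), and the price of stability is $PoS=1$, i.e. there is a Nash-routing whose social cost equals the minimum social cost over all routings.
   Context: A routing game is a tuple $\mathcal R=(\mathbf N,G,\mathcal P)$: players $\mathbf N=\{1,\dots,N\}$ ($N\ge1$), a finite graph $G=(V,E)$, and for each player $i$ a nonempty finite set $\mathcal P_i$ of paths in $G$ from a source $u_i$ to a destination $v_i$. A routing is $\mathbf p=[p_1,\dots,p_N]$ with $p_i\in\mathcal P_i$; $(p_i';\mathbf p_{-i})$ denotes the routing obtained by replacing $p_i$ with $p_i'$. $C_e(\mathbf p)$ is the number of players $j$ with $e\in p_j$; $C_i(\mathbf p)=\max_{e\in p_i}C_e(\mathbf p)$; $D_i(\mathbf p)=|p_i|$ (number of edges); $C(\mathbf p)=\max_{e}C_e(\mathbf p)$; $D(\mathbf p)=\max_i|p_i|$. A max game has player cost $pc_i(\mathbf p)=\max(C_i(\mathbf p),D_i(\mathbf p))$ and social cost $SC(\mathbf p)=\max(C(\mathbf p),D(\mathbf p))$. A greedy move by player $i$ takes $\mathbf p$ to $(p_i';\mathbf p_{-i})$ for some $p_i'\in\mathcal P_i$ with strictly smaller $pc_i$. A Nash-routing is a routing $\mathbf p$ with $pc_i(\mathbf p)\le pc_i(p_i';\mathbf p_{-i})$ for all $i$ and all $p_i'\in\mathcal P_i$. With $SC^*$ the minimum social cost over all routings and $\mathbf P$ the set of Nash-routings, $PoS=\inf_{\mathbf p\in\mathbf P}SC(\mathbf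 p)/SC^*$. *)

theory Defs
  imports Main
begin

definition finite_graph :: "'v set \<Rightarrow> ('v \<times> 'v) set \<Rightarrow> bool" where
  "finite_graph V E \<longleftrightarrow> finite V \<and> E \<subseteq> V \<times> V"

definition path_edges :: "'v list \<Rightarrow> ('v \<times> 'v) set" where
  "path_edges xs = set (zip xs (tl xs))"

definition path_len :: "'v list \<Rightarrow> nat" where
  "path_len xs = length xs - 1"

definition is_path :: "'v set \<Rightarrow> ('v \<times> 'v) set \<Rightarrow> 'v \<Rightarrow> 'v \<Rightarrow> 'v list \<Rightarrow> bool" where
  "is_path V E u v xs \<longleftrightarrow> xs \<noteq> [] \<and> hd xs = u \<and> last xs = v \<and> distinct xs
     \<and> set xs \<subseteq> V \<and> path_edges xs \<subseteq> E"

definition routing_game ::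
  "'v set \<Rightarrow> ('v \<times> 'v) set \<Rightarrow> nat \<Rightarrow> (nat \<Rightarrow> 'v) \<Rightarrow> (nat \<Rightarrow> 'v) \<Rightarrow> (nat \<Rightarrow> 'v list set) \<Rightarrow> bool" where
  "routing_game V E N src dst P \<longleftrightarrow> N \<ge> 1 \<and> finite_graph V E \<and>
     (\<forall>i\<in>{1..N}. finite (P i) \<and> P i \<noteq> {} \<and> (\<forall>p\<in>P i. is_path V E (src i) (dst i) p))"

definition is_routing :: "nat \<Rightarrow> (nat \<Rightarrow> 'v list set) \<Rightarrow> (nat \<Rightarrow> 'v list) \<Rightarrow> bool" where
  "is_routing N P p \<longleftrightarrow> (\<forall>i\<in>{1..N}. p i \<in> P i)"

definition edge_cong :: "nat \<Rightarrow> (nat \<Rightarrow> 'v list) \<Rightarrow> ('v \<times> 'v) \<Rightarrow> nat" where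
  "edge_cong N p e = card {j \<in> {1..N}. e \<in> path_edges (p j)}"

(* C_i(p) (0 for a path without edges) *)
definition player_cong :: "nat \<Rightarrow> (nat \<Rightarrow> 'v list) \<Rightarrow> nat \<Rightarrow> nat" where
  "player_cong N p i = Max (insert 0 (edge_cong N p ` path_edges (p i)))"

definition player_cost :: "nat \<Rightarrow> (nat \<Rightarrow> 'v list) \<Rightarrow> nat \<Rightarrow> nat" where
  "player_cost N p i = max (player_cong N p i) (path_len (p i))"

definition congestion :: "('v \<times> 'v) set \<Rightarrow> nat \<Rightarrow> (nat \<Rightarrow> 'v list) \<Rightarrow> nat" where
  "congestion E N p = Max (insert 0 (edge_cong N p ` E))"

definition dilation :: "nat \<Rightarrow> (nat \<Rightarrow> 'v list) \<Rightarrow> nat" where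
  "dilation N p = Max (insert 0 ((\<lambda>i. path_len (p i)) ` {1..N}))"

definition social_cost :: "('v \<times> 'v) set \<Rightarrow> nat \<Rightarrow> (nat \<Rightarrow> 'v list) \<Rightarrow> nat" where
  "social_cost E N p = max (congestion E N p) (dilation N p)"

definition greedy_move ::
  "nat \<Rightarrow> (nat \<Rightarrow> 'v list set) \<Rightarrow> (nat \<Rightarrow> 'v list) \<Rightarrow> (nat \<Rightarrow> 'v list) \<Rightarrow> bool" where
  "greedy_move N P p q \<longleftrightarrow> (\<exists>i\<in>{1..N}. \<exists>p'\<in>P i.
       q = p(i := p') \<and> player_cost N q i < player_cost N p i)"

definition nash_routing :: "nat \<Rightarrow> (nat \<Rightarrow> 'v list set) \<Rightarrow> (nat \<Rightarrow> 'v list) \<Rightarrow> bool" where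
  "nash_routing N P p \<longleftrightarrow> is_routing N P p \<and>
     (\<forall>i\<in>{1..N}. \<forall>p'\<in>P i. player_cost N p i \<le> player_cost N (p(i := p')) i)"

end

theory Submission
  imports Defs "HOL-Library.Multiset_Order"
begin

(* View every edge e of the graph and every player j as a "resource" whose load
   is C_e(p), respectively |p_j|.  The potential of a routing is the multiset of all resource
   loads.  In a greedy move of player i with cost c = pc_i(p), every load that changes drops
   below c, and some resource of load exactly c (an edge of p_i of maximal congestion, or
   player i itself) does change.  Hence the potential decreases in the (well-founded)
   Dershowitz-Manna multiset order, and the social cost, being the largest load, does not grow.

   After analysing a single greedy move, the theorem follows by running greedy moves
   from a socially optimal routing. *)

lemma count_image_mset_mset_set:
  assumes "finite A"
  shows "count (image_mset f (mset_set A)) y = card {x\<in>A. f x = y}"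
proof -
  have "count (image_mset f (mset_set A)) y = (\<Sum>x\<in>{x\<in>A. f x = y}. 1)"
    using assms by (simp add: count_image_mset' Collect_conj_eq Int_commute eq_commute)
  then show ?thesis
    by simp
qed

lemma image_mset_less_if_changes_below:
  fixes f g :: "'a \<Rightarrow> 'b::linorder"
  assumes fin: "finite A"
    and below: "\<forall>x\<in>A. g x \<noteq> f x \<longrightarrow> g x < c"
    and top: "\<exists>x\<in>A. f x = c \<and> g x \<noteq> f x"
  shows "image_mset g (mset_set A) < image_mset f (mset_set A)"
proof -
  have "{x\<in>A. g x = c} \<subset> {x\<in>A. f x = c}"
    using below top by force
  then have fewer_c: "card {x\<in>A. g x = c} < card {x\<in>A. f x = c}"
    using fin by (simp add: psubset_card_mono)
  show ?thesis
    unfolding less_multiset\<^sub>H\<^sub>O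
  proof (intro conjI allI impI)
    show "image_mset g (mset_set A) \<noteq> image_mset f (mset_set A)"
      using fewer_c fin count_image_mset_mset_set[of A g c] count_image_mset_mset_set[of A f c]
      by auto
  next
    fix y
    assume "count (image_mset f (mset_set A)) y < count (image_mset g (mset_set A)) y"
    then have "card {x\<in>A. f x = y} < card {x\<in>A. g x = y}"
      using fin by (simp add: count_image_mset_mset_set)
    moreover have "finite {x\<in>A. f x = y}"
      using fin by simp
    ultimately have "\<not> {x\<in>A. g x = y} \<subseteq> {x\<in>A. f x = y}"
      using card_mono leD by metis
    then have "y < c"
      using below by auto
    then show "\<exists>x>y. count (image_mset g (mset_set A)) x < count (image_mset f (mset_set A)) x"
      using fewer_c fin by (auto simp: count_image_mset_mset_set)
  qed
qed

lemma Max_changes_below: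
  fixes f g :: "'a \<Rightarrow> nat"
  assumes fin: "finite A"
    and below: "\<forall>x\<in>A. g x \<noteq> f x \<longrightarrow> g x < c"
  shows "Max (insert 0 (g ` A)) \<le> max c (Max (insert 0 (f ` A)))"
proof (rule Max.boundedI)
  fix a
  assume "a \<in> insert 0 (g ` A)"
  then consider "a = 0" | x where "x \<in> A" "a = g x"
    by blast
  then show "a \<le> max c (Max (insert 0 (f ` A)))"
  proof cases
    case 2
    have "f x \<le> Max (insert 0 (f ` A))"
      using fin 2 by (intro Max_ge) auto
    then show ?thesis
      using below 2 by (cases "g x = f x") auto
  qed simp
qed (use fin in simp_all)

lemma no_infinite_run_if_potential:
  assumes wf: "wf R"
    and step: "\<And>x y. x \<in> S \<Longrightarrow> step x y \<Longrightarrow> y \<in> S \<and> (pot y, pot x) \<in> R"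
  shows "\<nexists>r. r 0 \<in> S \<and> (\<forall>k. step (r k) (r (Suc k)))"
proof
  assume "\<exists>r. r 0 \<in> S \<and> (\<forall>k. step (r k) (r (Suc k)))"
  then obtain r where r0: "r 0 \<in> S" and run: "\<forall>k. step (r k) (r (Suc k))"
    by blast
  have in_S: "r k \<in> S" for k
    by (induction k) (use r0 run step in blast)+
  have "\<forall>k. ((pot \<circ> r) (Suc k), (pot \<circ> r) k) \<in> R"
    using in_S run step by simp
  then show False
    using wf unfolding wf_iff_no_infinite_down_chain by blast
qed

lemma terminal_state_below:
  assumes wf: "wf R"
    and step: "\<And>x y. x \<in> S \<Longrightarrow> step x y \<Longrightarrow> y \<in> S \<and> (pot y, pot x) \<in> R"
    and cost: "\<And>x y. x \<in> S \<Longrightarrow> step x y \<Longrightarrow> cost y \<le> (cost x :: 'c::preorder)"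
    and start: "s \<in> S"
  shows "\<exists>t\<in>S. (\<nexists>u. step t u) \<and> cost t \<le> cost s"
  using start
proof (induction s rule: wf_induct_rule[OF wf_inv_image[OF wf, of pot]])
  case (1 s)
  show ?case
  proof (cases "\<exists>u. step s u")
    case True
    then obtain u where su: "step s u"
      by blast
    have "u \<in> S" "(pot u, pot s) \<in> R"
      using step[OF 1(2) su] by auto
    then obtain t where "t \<in> S" "\<nexists>v. step t v" "cost t \<le> cost u"
      using 1(1)[of u] by auto
    then show ?thesis
      using cost[OF 1(2) su] order_trans by blast
  qed (use 1(2) in auto)
qed

lemma finite_path_edges: "finite (path_edges xs)"
  by (simp add: path_edges_def)

lemma edge_cong_le_player_cong: "e \<in> path_edges (p i) \<Longrightarrow> edge_cong N p e \<le> player_cong N p i"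
  unfolding player_cong_def by (rule Max_ge) (auto simp: finite_path_edges)

lemma routing_game_finite_edges: "routing_game V E N src dst P \<Longrightarrow> finite E"
  unfolding routing_game_def finite_graph_def by (meson finite_SigmaI finite_subset)

lemma routing_path_edges:
  assumes "routing_game V E N src dst P" "is_routing N P p" "i \<in> {1..N}"
  shows "path_edges (p i) \<subseteq> E"
  using assms unfolding routing_game_def is_path_def is_routing_def by blast

lemma routing_exists:
  assumes "routing_game V E N src dst P"
  shows "\<exists>p. is_routing N P p"
proof -
  have "\<forall>i\<in>{1..N}. \<exists>x. x \<in> P i"
    using assms unfolding routing_game_def by blast
  then show ?thesis
    unfolding is_routing_def by metis
qed

lemma player_cost_le_social_cost:
  assumes G: "routing_game V E N src dst P" and R: "is_routing N P p" and i: "i \<in> {1..N}"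
  shows "player_cost N p i \<le> social_cost E N p"
proof -
  have "player_cong N p i \<le> congestion E N p"
    unfolding player_cong_def congestion_def
    using routing_path_edges[OF G R i] routing_game_finite_edges[OF G]
    by (intro Max_mono) auto
  moreover have "path_len (p i) \<le> dilation N p"
    unfolding dilation_def using i by (intro Max_ge) auto
  ultimately show ?thesis
    unfolding player_cost_def social_cost_def by auto
qed

lemma edge_cong_update_left:
  assumes i: "i \<in> {1..N}" and e: "e \<in> path_edges (p i)" "e \<notin> path_edges p'"
  shows "edge_cong N (p(i := p')) e < edge_cong N p e"
proof -
  let ?users = "{j\<in>{1..N}. e \<in> path_edges (p j)}"
  have "{j\<in>{1..N}. e \<in> path_edges ((p(i := p')) j)} = ?users - {i}"
    using e by auto
  moreover have "card (?users - {i}) < card ?users"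
    using i e by (intro card_Diff1_less) auto
  ultimately show ?thesis
    unfolding edge_cong_def by simp
qed

lemma edge_cong_update_untouched:
  assumes "e \<notin> path_edges (p i)" "e \<notin> path_edges p'"
  shows "edge_cong N (p(i := p')) e = edge_cong N p e"
proof -
  have "{j\<in>{1..N}. e \<in> path_edges ((p(i := p')) j)} = {j\<in>{1..N}. e \<in> path_edges (p j)}"
    using assms by auto
  then show ?thesis
    unfolding edge_cong_def by simp
qed

section \<open>The potential\<close>

definition resources :: "('v \<times> 'v) set \<Rightarrow> nat \<Rightarrow> (('v \<times> 'v) + nat) set" where
  "resources E N = Inl ` E \<union> Inr ` {1..N}"

definition load :: "nat \<Rightarrow> (nat \<Rightarrow> 'v list) \<Rightarrow> ('v \<times> 'v) + nat \<Rightarrow> nat" where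
  "load N p x = (case x of Inl e \<Rightarrow> edge_cong N p e | Inr j \<Rightarrow> path_len (p j))"

definition potential :: "('v \<times> 'v) set \<Rightarrow> nat \<Rightarrow> (nat \<Rightarrow> 'v list) \<Rightarrow> nat multiset" where
  "potential E N p = image_mset (load N p) (mset_set (resources E N))"

context
  fixes N :: nat and p :: "nat \<Rightarrow> 'v list" and i :: nat and p' :: "'v list"
  assumes player: "i \<in> {1..N}"
    and improves: "player_cost N (p(i := p')) i < player_cost N p i"
begin

lemma improving_move_edges_below:
  assumes "e \<in> path_edges (p i) \<union> path_edges p'"
  shows "edge_cong N (p(i := p')) e < player_cost N p i"
proof (cases "e \<in> path_edges p'")
  case True
  then have "edge_cong N (p(i := p')) e \<le> player_cong N (p(i := p')) i"
    by (intro edge_cong_le_player_cong) simp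
  then show ?thesis
    using improves unfolding player_cost_def by linarith
next
  case False
  then have "e \<in> path_edges (p i)"
    using assms by blast
  then have "edge_cong N (p(i := p')) e < edge_cong N p e"
      and "edge_cong N p e \<le> player_cong N p i"
    using edge_cong_update_left[OF player _ False] edge_cong_le_player_cong[of e p i N] by auto
  then show ?thesis
    unfolding player_cost_def by linarith
qed

lemma improving_move_changes_below:
  assumes "load N (p(i := p')) x \<noteq> load N p x"
  shows "load N (p(i := p')) x < player_cost N p i"
proof (cases x)
  case (Inl e)
  then have "e \<in> path_edges (p i) \<union> path_edges p'"
    using assms edge_cong_update_untouched unfolding load_def by fastforce
  then show ?thesis
    using Inl improving_move_edges_below unfolding load_def by simp
next
  case (Inr j)
  then have "j = i"
    using assms unfolding load_def by (auto split: if_splits)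
  then show ?thesis
    using Inr improves unfolding load_def player_cost_def by auto
qed

lemma improving_move_changes_top:
  assumes edges: "path_edges (p i) \<subseteq> E"
  shows "\<exists>x\<in>resources E N. load N p x = player_cost N p i \<and> load N (p(i := p')) x \<noteq> load N p x"
proof (cases "path_len (p i) = player_cost N p i")
  case True
  then show ?thesis
    using improves player unfolding load_def player_cost_def resources_def
    by (intro bexI[of _ "Inr i"]) auto
next
  case False
  then have cong: "player_cong N p i = player_cost N p i" and "player_cost N p i > 0"
    using improves unfolding player_cost_def by auto
  then have "player_cost N p i \<in> edge_cong N p ` path_edges (p i)"
    using Max_in[of "insert 0 (edge_cong N p ` path_edges (p i))"]
    unfolding player_cong_def by (auto simp: finite_path_edges)
  then obtain e where e: "e \<in> path_edges (p i)" "edge_cong N p e = player_cost N p i"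
    by (metis imageE)
  moreover have "edge_cong N (p(i := p')) e < player_cost N p i"
    using e improving_move_edges_below by blast
  ultimately show ?thesis
    using edges unfolding load_def resources_def by (intro bexI[of _ "Inl e"]) auto
qed

end

lemma greedy_move_effect:
  assumes G: "routing_game V E N src dst P" and R: "is_routing N P p"
    and move: "greedy_move N P p q"
  shows "is_routing N P q" and "potential E N q < potential E N p"
    and "social_cost E N q \<le> social_cost E N p"
proof -
  obtain i p' where i: "i \<in> {1..N}" and p': "p' \<in> P i" and q: "q = p(i := p')"
    and improves: "player_cost N (p(i := p')) i < player_cost N p i"
    using move unfolding greedy_move_def by blast
  let ?c = "player_cost N p i"
  have below: "\<forall>x. load N q x \<noteq> load N p x \<longrightarrow> load N q x < ?c"
    using improving_move_changes_below[OF i improves] q by blast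
  show "is_routing N P q"
    using R p' q unfolding is_routing_def by auto
  have "finite (resources E N)"
    using routing_game_finite_edges[OF G] by (simp add: resources_def)
  then show "potential E N q < potential E N p"
    unfolding potential_def
    using below improving_move_changes_top[OF i improves routing_path_edges[OF G R i]] q
    by (intro image_mset_less_if_changes_below) auto
  have "edge_cong N q e < ?c" if "edge_cong N q e \<noteq> edge_cong N p e" for e
    using below[rule_format, of "Inl e"] that by (simp add: load_def)
  then have "congestion E N q \<le> max ?c (congestion E N p)"
    using routing_game_finite_edges[OF G] unfolding congestion_def
    by (intro Max_changes_below) auto
  moreover have "path_len (q j) < ?c" if "path_len (q j) \<noteq> path_len (p j)" for j
    using below[rule_format, of "Inr j"] that by (simp add: load_def)
  then have "dilation N q \<le> max ?c (dilation N p)"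
    unfolding dilation_def by (intro Max_changes_below) auto
  ultimately show "social_cost E N q \<le> social_cost E N p"
    using player_cost_le_social_cost[OF G R i] unfolding social_cost_def by auto
qed

lemma no_greedy_move_nash:
  "is_routing N P p \<Longrightarrow> \<nexists>q. greedy_move N P p q \<Longrightarrow> nash_routing N P p"
  unfolding nash_routing_def greedy_move_def by (metis not_le)

theorem mainTheorem2:
  fixes V :: "'v set" and E :: "('v \<times> 'v) set" and N :: nat
    and src dst :: "nat \<Rightarrow> 'v" and P :: "nat \<Rightarrow> 'v list set"
  assumes "routing_game V E N src dst P"
  shows "(\<nexists>r :: nat \<Rightarrow> nat \<Rightarrow> 'v list.
            is_routing N P (r 0) \<and> (\<forall>k. greedy_move N P (r k) (r (Suc k))))
       \<and> (\<forall>p. is_routing N P p \<and> (\<nexists>q. greedy_move N P p q) \<longrightarrow> nash_routing N P p)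
       \<and> (\<exists>p. nash_routing N P p)
       \<and> (\<exists>p. nash_routing N P p \<and> (\<forall>q. is_routing N P q \<longrightarrow> social_cost E N p \<le> social_cost E N q))"
proof -
  let ?S = "{p. is_routing N P p}"
  note wf = wf_less_multiset[where 'a = nat]
  have step: "\<And>p q. p \<in> ?S \<Longrightarrow> greedy_move N P p q
      \<Longrightarrow> q \<in> ?S \<and> (potential E N q, potential E N p) \<in> {(M, M'). M < M'}"
    using greedy_move_effect[OF assms] by auto
  have terminates: "\<nexists>r :: nat \<Rightarrow> nat \<Rightarrow> 'v list.
      is_routing N P (r 0) \<and> (\<forall>k. greedy_move N P (r k) (r (Suc k)))"
    using no_infinite_run_if_potential[OF wf step] by simp
  obtain opt where opt: "is_routing N P opt"
    and optimal: "\<forall>q. is_routing N P q \<longrightarrow> social_cost E N opt \<le> social_cost E N q"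
    using routing_exists[OF assms] ex_has_least_nat[of "is_routing N P" _ "social_cost E N"]
    by blast
  have cost: "\<And>p q. p \<in> ?S \<Longrightarrow> greedy_move N P p q \<Longrightarrow> social_cost E N q \<le> social_cost E N p"
    using greedy_move_effect(3)[OF assms] by auto
  obtain p where "is_routing N P p" "\<nexists>q. greedy_move N P p q"
      and "social_cost E N p \<le> social_cost E N opt"
    using terminal_state_below[where step = "greedy_move N P" and cost = "social_cost E N",
        OF wf step cost] opt by auto
  then have "nash_routing N P p \<and> (\<forall>q. is_routing N P q \<longrightarrow> social_cost E N p \<le> social_cost E N q)"
    using no_greedy_move_nash optimal order_trans by blast
  then show ?thesis
    using terminates no_greedy_move_nash by blast
qed

end
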